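(* Let $G$ be a finite simple graph without isolated vertices. Then the non-cover complex $\mathcal{NC}(G)$ is $(|V(G)|-i\gamma(G)-1)$-collapsible.
   Context: For a finite simple graph $G$, a cover of $G$ is a set $W\subseteq V(G)$ such that $V(G)\setminus W$ is an independent set (i.e. $W$ contains an endpoint of every edge). The non-cover complex $\mathcal{NC}(G)$ is the simplicial complex on $V(G)$ whose faces are all sets $W\subseteq V(G)$ that are not covers of $G$ (equivalently, $V(G)\setminus W$ contains both endpoints of some edge). For $A,D\subseteq V(G)$, $D$ dominates $A$ if every $v\in A$ has a neighbor in $D$; $\gamma(G;A)$ is the minimum size of a set dominating $A$. The independent domination number is $i\gamma(G)=\max\{\gamma(G;I): I \text{ an independent set of } G\}$ (with $i\gamma(G)=\infty$ if $G$ has an isolated vertex). For a finite simplicial complex $X$, a face $\sigma$ is free if exactly one facet of $X$ contains $\sigma$; an elementary $d$-collapse deletes all faces containing a given free face of size at most $d$; $X$ is $d$-collapsible if the void complex can be obtained from $X$ by a finite sequence of elementary $d$-collapses. *)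

theory Defs
  imports Main "HOL-Library.Extended_Nat"
begin

definition simple_graph :: "'a set \<Rightarrow> ('a \<Rightarrow> 'a \<Rightarrow> bool) \<Rightarrow> bool" where
  "simple_graph V E \<longleftrightarrow> finite V \<and> (\<forall>u v. E u v \<longrightarrow> u \<in> V \<and> v \<in> V)
     \<and> (\<forall>u v. E u v \<longrightarrow> E v u) \<and> (\<forall>u. \<not> E u u)"

definition has_isolated_vertex :: "'a set \<Rightarrow> ('a \<Rightarrow> 'a \<Rightarrow> bool) \<Rightarrow> bool" where
  "has_isolated_vertex V E \<longleftrightarrow> (\<exists>v\<in>V. \<forall>u. \<not> E v u)"

definition independent :: "'a set \<Rightarrow> ('a \<Rightarrow> 'a \<Rightarrow> bool) \<Rightarrow> 'a set \<Rightarrow> bool" where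
  "independent V E I \<longleftrightarrow> I \<subseteq> V \<and> (\<forall>u\<in>I. \<forall>v\<in>I. \<not> E u v)"

definition is_cover :: "'a set \<Rightarrow> ('a \<Rightarrow> 'a \<Rightarrow> bool) \<Rightarrow> 'a set \<Rightarrow> bool" where
  "is_cover V E W \<longleftrightarrow> W \<subseteq> V \<and> independent V E (V - W)"

definition non_cover_complex :: "'a set \<Rightarrow> ('a \<Rightarrow> 'a \<Rightarrow> bool) \<Rightarrow> 'a set set" where
  "non_cover_complex V E = {W. W \<subseteq> V \<and> \<not> is_cover V E W}"

definition dominates :: "('a \<Rightarrow> 'a \<Rightarrow> bool) \<Rightarrow> 'a set \<Rightarrow> 'a set \<Rightarrow> bool" where
  "dominates E D A \<longleftrightarrow> (\<forall>v\<in>A. \<exists>u\<in>D. E v u)"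

definition dom_number :: "'a set \<Rightarrow> ('a \<Rightarrow> 'a \<Rightarrow> bool) \<Rightarrow> 'a set \<Rightarrow> nat" where
  "dom_number V E A = (LEAST k. \<exists>D. D \<subseteq> V \<and> card D = k \<and> dominates E D A)"

definition ind_dom_number :: "'a set \<Rightarrow> ('a \<Rightarrow> 'a \<Rightarrow> bool) \<Rightarrow> enat" where
  "ind_dom_number V E =
     (if has_isolated_vertex V E then \<infinity>
      else enat (Max {dom_number V E I | I. independent V E I}))"

(* simplicial complexes as sets of (finite) faces *)
definition facet :: "'a set set \<Rightarrow> 'a set \<Rightarrow> bool" where
  "facet X F \<longleftrightarrow> F \<in> X \<and> (\<forall>G\<in>X. F \<subseteq> G \<longrightarrow> G = F)"

definition free_face :: "'a set set \<Rightarrow> 'a set \<Rightarrow> bool" where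
  "free_face X \<sigma> \<longleftrightarrow> \<sigma> \<in> X \<and> (\<exists>!F. facet X F \<and> \<sigma> \<subseteq> F)"

definition elementary_collapse :: "int \<Rightarrow> 'a set set \<Rightarrow> 'a set set \<Rightarrow> bool" where
  "elementary_collapse d X Y \<longleftrightarrow>
     (\<exists>\<sigma>. free_face X \<sigma> \<and> int (card \<sigma>) \<le> d \<and> Y = {\<tau> \<in> X. \<not> \<sigma> \<subseteq> \<tau>})"

inductive d_collapsible :: "int \<Rightarrow> 'a set set \<Rightarrow> bool" where
  void: "d_collapsible d {}"
| step: "elementary_collapse d X Y \<Longrightarrow> d_collapsible d Y \<Longrightarrow> d_collapsible d X"

end

theory Submission
  imports Defs
begin

text \<open>
  Induction on \<open>|V|\<close> for a generalisation in which the vertices of a set \<open>S\<close> carry loops, so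
  that \<open>W\<close> is a face when \<open>V - W\<close> contains an edge or a vertex of \<open>S\<close>, and \<open>i\<gamma>\<close> becomes the
  maximal closed domination number of an independent set avoiding \<open>S\<close>.
  The complex is the union of the deletion of a vertex \<open>v\<close> and the cone over its link, and a
  \<open>(d-1)\<close>-collapse of the link together with a \<open>d\<close>-collapse of the deletion yields a
  \<open>d\<close>-collapse of the whole complex, since every free face \<open>\<sigma>\<close> of the link lifts to the free face
  \<open>\<sigma> + v\<close>. If \<open>v\<close> is looped, its deletion is a full simplex. Otherwise choose \<open>v\<close> outside an
  independent set \<open>I\<close> realising the maximum: the link is the complex of \<open>G - v\<close>, the deletion
  is that of \<open>G - v\<close> with loops at the neighbours of \<open>v\<close>, and a dominating set of \<open>I - N(v)\<close>
  in \<open>G - v\<close> together with \<open>v\<close> dominates \<open>I\<close>, which pays for the lost dimension.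
\<close>

lemma d_collapsible_mono:
  assumes "d_collapsible d X" "d \<le> d'"
  shows "d_collapsible d' X"
  using assms
proof (induction rule: d_collapsible.induct)
  case (void d)
  show ?case by (rule d_collapsible.void)
next
  case (step d X Y)
  then have "elementary_collapse d' X Y"
    unfolding elementary_collapse_def by fastforce
  with step show ?case by (blast intro: d_collapsible.step)
qed

lemma d_collapsible_Pow:
  assumes "0 \<le> d"
  shows "d_collapsible d (Pow A)"
proof -
  have "free_face (Pow A) {}"
    unfolding free_face_def facet_def by auto
  with assms have "elementary_collapse d (Pow A) {}"
    unfolding elementary_collapse_def by (intro exI[of _ "{}"]) auto
  then show ?thesis by (blast intro: d_collapsible.step d_collapsible.void)
qed

context
  fixes v :: 'a and D L :: "'a set set"
  assumes v_notin_D: "\<forall>\<tau>\<in>D. v \<notin> \<tau>" and v_notin_L: "\<forall>\<tau>\<in>L. v \<notin> \<tau>"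
begin

lemma cone_union_mem_insert_iff:
  assumes "v \<notin> F"
  shows "insert v F \<in> D \<union> insert v ` L \<longleftrightarrow> F \<in> L"
  using assms v_notin_D v_notin_L by (auto simp: insert_ident)

lemma facet_cone_union_iff:
  assumes "v \<notin> F"
  shows "facet (D \<union> insert v ` L) (insert v F) \<longleftrightarrow> facet L F"
proof
  assume F: "facet (D \<union> insert v ` L) (insert v F)"
  show "facet L F"
    unfolding facet_def
  proof (intro conjI ballI impI)
    show "F \<in> L" using F assms cone_union_mem_insert_iff unfolding facet_def by blast
    fix H assume "H \<in> L" "F \<subseteq> H"
    then have "insert v H \<in> D \<union> insert v ` L" "insert v F \<subseteq> insert v H" by auto
    then have "insert v H = insert v F"
      using F by (simp add: facet_def)
    then show "H = F" using \<open>H \<in> L\<close> v_notin_L assms by (metis insert_ident)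
  qed
next
  assume F: "facet L F"
  show "facet (D \<union> insert v ` L) (insert v F)"
    unfolding facet_def
  proof (intro conjI ballI impI)
    show "insert v F \<in> D \<union> insert v ` L" using F unfolding facet_def by blast
    fix H assume H: "H \<in> D \<union> insert v ` L" "insert v F \<subseteq> H"
    then obtain \<tau> where "\<tau> \<in> L" "H = insert v \<tau>" using v_notin_D by auto
    moreover have "F \<subseteq> \<tau>" using H calculation assms by auto
    ultimately show "H = insert v F" using F unfolding facet_def by blast
  qed
qed

lemma free_face_cone_union:
  assumes "free_face L \<sigma>"
  shows "free_face (D \<union> insert v ` L) (insert v \<sigma>)"
proof -
  obtain G where G: "facet L G" "\<sigma> \<subseteq> G" and G_unique: "\<And>F. facet L F \<Longrightarrow> \<sigma> \<subseteq> F \<Longrightarrow> F = G"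
    using assms unfolding free_face_def by blast
  have "\<sigma> \<in> L" using assms unfolding free_face_def by blast
  have v_notin: "v \<notin> \<sigma>" "v \<notin> G" using \<open>\<sigma> \<in> L\<close> G(1) v_notin_L unfolding facet_def by auto
  show ?thesis
    unfolding free_face_def
  proof (intro conjI)
    show "insert v \<sigma> \<in> D \<union> insert v ` L" using \<open>\<sigma> \<in> L\<close> by blast
  next
    show "\<exists>!H. facet (D \<union> insert v ` L) H \<and> insert v \<sigma> \<subseteq> H"
    proof (rule ex1I)
      show "facet (D \<union> insert v ` L) (insert v G) \<and> insert v \<sigma> \<subseteq> insert v G"
        using facet_cone_union_iff v_notin G by blast
      fix H assume H: "facet (D \<union> insert v ` L) H \<and> insert v \<sigma> \<subseteq> H"
      then obtain F where "F \<in> L" "H = insert v F"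
        using v_notin_D unfolding facet_def by auto
      moreover have "v \<notin> F" using calculation v_notin_L by blast
      ultimately have "facet L F" "\<sigma> \<subseteq> F"
        using H facet_cone_union_iff v_notin by auto
      then show "H = insert v G" using G_unique \<open>H = insert v F\<close> by blast
    qed
  qed
qed

lemma elementary_collapse_cone_union:
  assumes "elementary_collapse d L L'"
  shows "elementary_collapse (d + 1) (D \<union> insert v ` L) (D \<union> insert v ` L')"
proof -
  obtain \<sigma> where \<sigma>: "free_face L \<sigma>" "int (card \<sigma>) \<le> d" and L': "L' = {\<tau> \<in> L. \<not> \<sigma> \<subseteq> \<tau>}"
    using assms unfolding elementary_collapse_def by blast
  have "v \<notin> \<sigma>" using \<sigma>(1) v_notin_L unfolding free_face_def by blast
  have "int (card (insert v \<sigma>)) \<le> d + 1"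
    using \<sigma>(2) by (cases "finite \<sigma>") (auto simp: card_insert_if)
  moreover have "D \<union> insert v ` L' = {\<tau> \<in> D \<union> insert v ` L. \<not> insert v \<sigma> \<subseteq> \<tau>}"
    using L' \<open>v \<notin> \<sigma>\<close> v_notin_D v_notin_L by (auto simp: insert_ident)
  ultimately show ?thesis
    using free_face_cone_union[OF \<sigma>(1)] unfolding elementary_collapse_def by blast
qed

end

lemma d_collapsible_cone_union:
  assumes "d_collapsible d L" "d_collapsible (d + 1) D"
    and "\<forall>\<tau>\<in>L. v \<notin> \<tau>" "\<forall>\<tau>\<in>D. v \<notin> \<tau>"
  shows "d_collapsible (d + 1) (D \<union> insert v ` L)"
  using assms
proof (induction rule: d_collapsible.induct)
  case (void d)
  then show ?case by simp
next
  case (step d L L')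
  then have "\<forall>\<tau>\<in>L'. v \<notin> \<tau>" unfolding elementary_collapse_def by auto
  with step show ?case
    by (blast intro: d_collapsible.step elementary_collapse_cone_union)
qed

lemma d_collapsible_link_deletion:
  assumes "d_collapsible (d - 1) {\<tau>. v \<notin> \<tau> \<and> insert v \<tau> \<in> X}"
    and "d_collapsible d {\<tau> \<in> X. v \<notin> \<tau>}"
  shows "d_collapsible d X"
proof -
  have "X = {\<tau> \<in> X. v \<notin> \<tau>} \<union> insert v ` {\<tau>. v \<notin> \<tau> \<and> insert v \<tau> \<in> X}"
  proof (intro set_eqI iffI)
    fix \<tau> assume "\<tau> \<in> X"
    then show "\<tau> \<in> {\<tau> \<in> X. v \<notin> \<tau>} \<union> insert v ` {\<tau>. v \<notin> \<tau> \<and> insert v \<tau> \<in> X}"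
      by (cases "v \<in> \<tau>") (auto intro!: image_eqI[of _ _ "\<tau> - {v}"] simp: insert_absorb)
  qed auto
  with d_collapsible_cone_union[of "d - 1"] assms show ?thesis by fastforce
qed

definition closed_dominates :: "('a \<Rightarrow> 'a \<Rightarrow> bool) \<Rightarrow> 'a set \<Rightarrow> 'a set \<Rightarrow> bool" where
  "closed_dominates E D A \<longleftrightarrow> (\<forall>x\<in>A. x \<in> D \<or> (\<exists>u\<in>D. E x u))"

text \<open>A vertex may dominate itself, so that the domination number stays meaningful for the
  isolated vertices that deleting a vertex can create.\<close>

definition closed_dom_number :: "'a set \<Rightarrow> ('a \<Rightarrow> 'a \<Rightarrow> bool) \<Rightarrow> 'a set \<Rightarrow> nat" where
  "closed_dom_number V E A = (LEAST k. \<exists>D. D \<subseteq> V \<and> card D = k \<and> closed_dominates E D A)"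

definition ind_closed_dom_number :: "'a set \<Rightarrow> ('a \<Rightarrow> 'a \<Rightarrow> bool) \<Rightarrow> 'a set \<Rightarrow> nat" where
  "ind_closed_dom_number V E S =
     Max {closed_dom_number V E I | I. independent V E I \<and> I \<inter> S = {}}"

definition looped_non_cover_complex :: "'a set \<Rightarrow> ('a \<Rightarrow> 'a \<Rightarrow> bool) \<Rightarrow> 'a set \<Rightarrow> 'a set set" where
  "looped_non_cover_complex V E S =
     {W. W \<subseteq> V \<and> \<not> (independent V E (V - W) \<and> S \<inter> (V - W) = {})}"

definition delete_vertex :: "('a \<Rightarrow> 'a \<Rightarrow> bool) \<Rightarrow> 'a \<Rightarrow> 'a \<Rightarrow> 'a \<Rightarrow> bool" where
  "delete_vertex E v a b \<longleftrightarrow> E a b \<and> a \<noteq> v \<and> b \<noteq> v"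

lemma simple_graph_delete_vertex:
  "simple_graph V E \<Longrightarrow> simple_graph (V - {v}) (delete_vertex E v)"
  unfolding simple_graph_def delete_vertex_def by auto

lemma closed_dom_number_le:
  "D \<subseteq> V \<Longrightarrow> closed_dominates E D A \<Longrightarrow> closed_dom_number V E A \<le> card D"
  unfolding closed_dom_number_def by (rule Least_le) blast

lemma closed_dom_number_obtain:
  assumes "A \<subseteq> V"
  obtains D where "D \<subseteq> V" "card D = closed_dom_number V E A" "closed_dominates E D A"
proof -
  have "\<exists>k D. D \<subseteq> V \<and> card D = k \<and> closed_dominates E D A"
    using assms by (auto simp: closed_dominates_def)
  then have "\<exists>D. D \<subseteq> V \<and> card D = closed_dom_number V E A \<and> closed_dominates E D A"
    unfolding closed_dom_number_def by (rule LeastI_ex)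
  then show ?thesis using that by blast
qed

lemma closed_dom_number_le_card: "A \<subseteq> V \<Longrightarrow> closed_dom_number V E A \<le> card A"
  by (rule closed_dom_number_le) (auto simp: closed_dominates_def)

lemma closed_dom_number_subgraph_mono:
  assumes "V' \<subseteq> V" "\<And>a b. E' a b \<Longrightarrow> E a b" "A \<subseteq> V'"
  shows "closed_dom_number V E A \<le> closed_dom_number V' E' A"
proof -
  obtain D where "D \<subseteq> V'" "card D = closed_dom_number V' E' A" "closed_dominates E' D A"
    using closed_dom_number_obtain[OF assms(3)] .
  moreover have "closed_dominates E D A"
    using \<open>closed_dominates E' D A\<close> assms(2) unfolding closed_dominates_def by blast
  ultimately show ?thesis using assms(1) closed_dom_number_le[of D V E A] by auto
qed

lemma finite_closed_dom_numbers:
  assumes "finite V"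
  shows "finite {closed_dom_number V E I | I. independent V E I \<and> I \<inter> S = {}}"
proof -
  have "{closed_dom_number V E I | I. independent V E I \<and> I \<inter> S = {}}
          \<subseteq> closed_dom_number V E ` Pow V"
    unfolding independent_def by auto
  then show ?thesis by (rule finite_subset) (use assms in simp)
qed

lemma ind_closed_dom_number_ge:
  "finite V \<Longrightarrow> independent V E I \<Longrightarrow> I \<inter> S = {} \<Longrightarrow>
     closed_dom_number V E I \<le> ind_closed_dom_number V E S"
  unfolding ind_closed_dom_number_def by (rule Max_ge) (auto intro: finite_closed_dom_numbers)

lemma ind_closed_dom_number_attained:
  assumes "finite V"
  obtains I where "independent V E I" "I \<inter> S = {}"
    "ind_closed_dom_number V E S = closed_dom_number V E I"
proof -
  have "independent V E {}" unfolding independent_def by simp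
  then have "ind_closed_dom_number V E S \<in> {closed_dom_number V E I | I. independent V E I \<and> I \<inter> S = {}}"
    unfolding ind_closed_dom_number_def using finite_closed_dom_numbers[OF assms]
    by (intro Max_in) auto
  then show ?thesis using that by blast
qed

lemma ind_closed_dom_number_less_card:
  assumes "finite V" "v \<in> V" "v \<in> S"
  shows "ind_closed_dom_number V E S < card V"
proof -
  obtain I where I: "independent V E I" "I \<inter> S = {}"
    "ind_closed_dom_number V E S = closed_dom_number V E I"
    using ind_closed_dom_number_attained[OF assms(1)] .
  then have "I \<subseteq> V - {v}" using assms unfolding independent_def by auto
  have "closed_dom_number V E I \<le> card I"
    using I(1) by (simp add: independent_def closed_dom_number_le_card)
  also have "\<dots> \<le> card (V - {v})"
    using assms(1) \<open>I \<subseteq> V - {v}\<close> by (intro card_mono) auto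
  also have "\<dots> < card V" using assms(1,2) by (rule card_Diff1_less)
  finally show ?thesis using I(3) by simp
qed

lemma closed_dom_number_le_delete_vertex:
  assumes "finite V" "independent V E I" "I \<inter> S = {}" "v \<notin> I"
  shows "closed_dom_number V E I \<le> ind_closed_dom_number (V - {v}) (delete_vertex E v) S"
proof -
  have "independent (V - {v}) (delete_vertex E v) I"
    using assms unfolding independent_def delete_vertex_def by auto
  then have "closed_dom_number (V - {v}) (delete_vertex E v) I
               \<le> ind_closed_dom_number (V - {v}) (delete_vertex E v) S"
    using assms by (intro ind_closed_dom_number_ge) auto
  moreover have "closed_dom_number V E I \<le> closed_dom_number (V - {v}) (delete_vertex E v) I"
    using assms unfolding independent_def delete_vertex_def
    by (intro closed_dom_number_subgraph_mono) auto
  ultimately show ?thesis by simp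
qed

lemma closed_dom_number_le_delete_neighbourhood:
  assumes "simple_graph V E" "v \<in> V" "independent V E I" "I \<inter> S = {}" "v \<notin> I"
  shows "closed_dom_number V E I
           \<le> ind_closed_dom_number (V - {v}) (delete_vertex E v) (S \<union> {u. E v u}) + 1"
proof -
  define I' where "I' = I - {u. E v u}"
  have fin: "finite (V - {v})" and sym: "\<And>x. E v x \<Longrightarrow> E x v"
    using assms(1) unfolding simple_graph_def by auto
  have "I' \<subseteq> V - {v}" using assms unfolding I'_def independent_def by auto
  then obtain D where D: "D \<subseteq> V - {v}" "card D = closed_dom_number (V - {v}) (delete_vertex E v) I'"
    "closed_dominates (delete_vertex E v) D I'"
    by (rule closed_dom_number_obtain)
  have "independent (V - {v}) (delete_vertex E v) I'" "I' \<inter> (S \<union> {u. E v u}) = {}"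
    using assms \<open>I' \<subseteq> V - {v}\<close> unfolding I'_def independent_def delete_vertex_def by auto
  then have "card D \<le> ind_closed_dom_number (V - {v}) (delete_vertex E v) (S \<union> {u. E v u})"
    using ind_closed_dom_number_ge[OF fin] D(2) by simp
  moreover have "closed_dominates E (insert v D) I"
    unfolding closed_dominates_def
  proof
    fix x assume "x \<in> I"
    show "x \<in> insert v D \<or> (\<exists>u\<in>insert v D. E x u)"
    proof (cases "E v x")
      case True
      then show ?thesis using sym by blast
    next
      case False
      then have "x \<in> I'" using \<open>x \<in> I\<close> by (simp add: I'_def)
      then show ?thesis using D(3) unfolding closed_dominates_def delete_vertex_def by blast
    qed
  qed
  then have "closed_dom_number V E I \<le> card (insert v D)"
    using D(1) assms(2) by (intro closed_dom_number_le) auto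
  moreover have "card (insert v D) \<le> card D + 1"
    by (cases "finite D") (auto simp: card_insert_if)
  ultimately show ?thesis by linarith
qed

lemma link_looped_non_cover_complex:
  assumes "v \<in> V"
  shows "{\<tau>. v \<notin> \<tau> \<and> insert v \<tau> \<in> looped_non_cover_complex V E S}
           = looped_non_cover_complex (V - {v}) (delete_vertex E v) S"
  using assms unfolding looped_non_cover_complex_def independent_def delete_vertex_def
  by (auto simp: Diff_insert2[symmetric])

lemma deletion_looped_non_cover_complex_loop:
  assumes "v \<in> V" "v \<in> S"
  shows "{\<tau> \<in> looped_non_cover_complex V E S. v \<notin> \<tau>} = Pow (V - {v})"
  using assms unfolding looped_non_cover_complex_def by auto

lemma independent_insert_delete_vertex_iff:
  assumes "simple_graph V E" "v \<in> V" "A \<subseteq> V - {v}"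
  shows "independent V E (insert v A)
           \<longleftrightarrow> independent (V - {v}) (delete_vertex E v) A \<and> A \<inter> {u. E v u} = {}"
  using assms unfolding simple_graph_def independent_def delete_vertex_def by blast

lemma deletion_looped_non_cover_complex:
  assumes "simple_graph V E" "v \<in> V" "v \<notin> S"
  shows "{\<tau> \<in> looped_non_cover_complex V E S. v \<notin> \<tau>}
           = looped_non_cover_complex (V - {v}) (delete_vertex E v) (S \<union> {u. E v u})"
proof (intro set_eqI)
  fix W
  show "W \<in> {\<tau> \<in> looped_non_cover_complex V E S. v \<notin> \<tau>}
          \<longleftrightarrow> W \<in> looped_non_cover_complex (V - {v}) (delete_vertex E v) (S \<union> {u. E v u})"
  proof (cases "W \<subseteq> V - {v}")
    case True
    then have "V - W = insert v (V - {v} - W)" using assms(2) by auto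
    moreover have "independent V E (insert v (V - {v} - W))
        \<longleftrightarrow> independent (V - {v}) (delete_vertex E v) (V - {v} - W) \<and> (V - {v} - W) \<inter> {u. E v u} = {}"
      by (rule independent_insert_delete_vertex_iff[OF assms(1,2)]) auto
    ultimately show ?thesis
      using True assms(3) unfolding looped_non_cover_complex_def by auto
  next
    case False
    then show ?thesis unfolding looped_non_cover_complex_def by auto
  qed
qed

lemma d_collapsible_looped_non_cover_complex:
  assumes "simple_graph V E"
  shows "d_collapsible (int (card V) - int (ind_closed_dom_number V E S) - 1)
           (looped_non_cover_complex V E S)"
  using assms
proof (induction "card V" arbitrary: V E S rule: less_induct)
  case less
  let ?d = "int (card V) - int (ind_closed_dom_number V E S) - 1"
  have fin: "finite V" using less.prems unfolding simple_graph_def by blast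
  have IH: "d_collapsible (int (card V) - 1 - int (ind_closed_dom_number (V - {v}) (delete_vertex E v) S') - 1)
              (looped_non_cover_complex (V - {v}) (delete_vertex E v) S')" if "v \<in> V" for v S'
  proof -
    have "card (V - {v}) < card V" using fin that by (rule card_Diff1_less)
    moreover have "0 < card V" using fin that by (auto simp: card_gt_0_iff)
    then have "int (card (V - {v})) = int (card V) - 1"
      using fin that by (simp add: card_Diff_singleton of_nat_diff)
    ultimately show ?thesis
      using less.hyps[of "V - {v}"] simple_graph_delete_vertex[OF less.prems] by simp
  qed
  obtain I where I: "independent V E I" "I \<inter> S = {}"
    "ind_closed_dom_number V E S = closed_dom_number V E I"
    using ind_closed_dom_number_attained[OF fin] .
  have link: "d_collapsible (?d - 1) {\<tau>. v \<notin> \<tau> \<and> insert v \<tau> \<in> looped_non_cover_complex V E S}"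
    if "v \<in> V" "v \<notin> I" for v
  proof -
    have "ind_closed_dom_number V E S \<le> ind_closed_dom_number (V - {v}) (delete_vertex E v) S"
      using closed_dom_number_le_delete_vertex[OF fin I(1,2) that(2)] I(3) by simp
    then show ?thesis
      unfolding link_looped_non_cover_complex[OF that(1)]
      using d_collapsible_mono[OF IH[OF that(1)]] by simp
  qed
  consider (loop) v where "v \<in> V" "v \<in> S"
    | (no_edge) "V \<inter> S = {}" "\<forall>u w. \<not> E u w"
    | (edge) u w where "V \<inter> S = {}" "E u w"
    by (cases "V \<inter> S = {}") auto
  then show ?case
  proof cases
    case (loop v)
    show ?thesis
    proof (rule d_collapsible_link_deletion[where v = v])
      show "d_collapsible (?d - 1) {\<tau>. v \<notin> \<tau> \<and> insert v \<tau> \<in> looped_non_cover_complex V E S}"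
        using link loop I(2) by blast
      show "d_collapsible ?d {\<tau> \<in> looped_non_cover_complex V E S. v \<notin> \<tau>}"
        unfolding deletion_looped_non_cover_complex_loop[OF loop]
        using ind_closed_dom_number_less_card[OF fin loop] by (intro d_collapsible_Pow) simp
    qed
  next
    case no_edge
    then have "looped_non_cover_complex V E S = {}"
      unfolding looped_non_cover_complex_def independent_def by auto
    then show ?thesis by (simp add: d_collapsible.void)
  next
    case (edge u w)
    have "u \<in> V" "w \<in> V" using edge(2) less.prems unfolding simple_graph_def by auto
    moreover have "u \<notin> I \<or> w \<notin> I" using edge(2) I(1) unfolding independent_def by blast
    ultimately obtain v where v: "v \<in> V" "v \<notin> I" by blast
    with edge(1) have "v \<notin> S" by blast
    show ?thesis
    proof (rule d_collapsible_link_deletion[where v = v])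
      show "d_collapsible (?d - 1) {\<tau>. v \<notin> \<tau> \<and> insert v \<tau> \<in> looped_non_cover_complex V E S}"
        using link v by blast
      have "ind_closed_dom_number V E S
              \<le> ind_closed_dom_number (V - {v}) (delete_vertex E v) (S \<union> {u. E v u}) + 1"
        using closed_dom_number_le_delete_neighbourhood[OF less.prems v(1) I(1,2) v(2)] I(3) by simp
      then show "d_collapsible ?d {\<tau> \<in> looped_non_cover_complex V E S. v \<notin> \<tau>}"
        unfolding deletion_looped_non_cover_complex[OF less.prems v(1) \<open>v \<notin> S\<close>]
        using d_collapsible_mono[OF IH[OF v(1)]] by simp
    qed
  qed
qed

lemma non_cover_complex_eq_looped: "non_cover_complex V E = looped_non_cover_complex V E {}"
  unfolding non_cover_complex_def looped_non_cover_complex_def is_cover_def by auto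

lemma dominates_from_closed_dominates:
  assumes G: "simple_graph V E" and no_isolated: "\<not> has_isolated_vertex V E"
    and I: "independent V E I" and D: "D \<subseteq> V" "closed_dominates E D I"
  obtains D' where "D' \<subseteq> V" "card D' \<le> card D" "dominates E D' I"
proof -
  have fin: "finite V" and E_in_V: "\<And>u w. E u w \<Longrightarrow> u \<in> V \<and> w \<in> V"
    using G unfolding simple_graph_def by auto
  have "I \<subseteq> V" using I unfolding independent_def by auto
  \<comment> \<open>Moving the vertices of \<open>I\<close> in \<open>D\<close> to neighbours keeps \<open>D\<close> dominating, because \<open>I\<close> is
      independent.\<close>
  define nb where "nb x = (if x \<in> I then (SOME u. E x u) else x)" for x
  have E_nb: "E x (nb x)" if "x \<in> I" for x
  proof -
    have "\<exists>u. E x u" using no_isolated that \<open>I \<subseteq> V\<close> unfolding has_isolated_vertex_def by auto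
    then show ?thesis unfolding nb_def using that by (auto intro: someI_ex)
  qed
  have "\<exists>u\<in>nb ` D. E x u" if "x \<in> I" for x
  proof (cases "x \<in> D")
    case True
    then show ?thesis using E_nb[OF \<open>x \<in> I\<close>] by blast
  next
    case False
    then obtain u where "u \<in> D" "E x u"
      using D(2) \<open>x \<in> I\<close> unfolding closed_dominates_def by blast
    moreover have "nb u = u"
      using calculation I \<open>x \<in> I\<close> unfolding independent_def nb_def by auto
    ultimately show ?thesis by (intro bexI[of _ u]) (auto intro: rev_image_eqI)
  qed
  then have "dominates E (nb ` D) I" unfolding dominates_def by blast
  moreover have "nb ` D \<subseteq> V"
    using D(1) E_nb E_in_V unfolding nb_def by auto
  moreover have "card (nb ` D) \<le> card D"
    using card_image_le[OF finite_subset[OF D(1) fin]] .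
  ultimately show ?thesis using that by blast
qed

lemma dom_number_eq_closed_dom_number:
  assumes G: "simple_graph V E" and no_isolated: "\<not> has_isolated_vertex V E"
    and I: "independent V E I"
  shows "dom_number V E I = closed_dom_number V E I"
proof -
  have "I \<subseteq> V" using I unfolding independent_def by auto
  obtain D where D: "D \<subseteq> V" "card D = closed_dom_number V E I" "closed_dominates E D I"
    using closed_dom_number_obtain[OF \<open>I \<subseteq> V\<close>] .
  obtain D' where D': "D' \<subseteq> V" "card D' \<le> card D" "dominates E D' I"
    using dominates_from_closed_dominates[OF G no_isolated I D(1,3)] .
  then have "\<exists>k D. D \<subseteq> V \<and> card D = k \<and> dominates E D I" by blast
  then have "\<exists>D. D \<subseteq> V \<and> card D = dom_number V E I \<and> dominates E D I"
    unfolding dom_number_def by (rule LeastI_ex)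
  then have "closed_dom_number V E I \<le> dom_number V E I"
    using closed_dom_number_le unfolding dominates_def closed_dominates_def by fastforce
  moreover have "dom_number V E I \<le> card D'"
    unfolding dom_number_def by (rule Least_le) (use D' in blast)
  ultimately show ?thesis using D'(2) D(2) by simp
qed

lemma ind_dom_number_eq_ind_closed_dom_number:
  assumes "simple_graph V E" "\<not> has_isolated_vertex V E"
  shows "the_enat (ind_dom_number V E) = ind_closed_dom_number V E {}"
proof -
  have "{dom_number V E I | I. independent V E I}
          = {closed_dom_number V E I | I. independent V E I \<and> I \<inter> {} = {}}"
    using dom_number_eq_closed_dom_number[OF assms] by force
  then show ?thesis
    unfolding ind_dom_number_def ind_closed_dom_number_def using assms(2) by simp
qed

theorem theorem1p2:
  fixes V :: "'a set" and E :: "'a \<Rightarrow> 'a \<Rightarrow> bool"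
  assumes "simple_graph V E"
    and "\<not> has_isolated_vertex V E"
  shows "d_collapsible (int (card V) - int (the_enat (ind_dom_number V E)) - 1)
           (non_cover_complex V E)"
  using d_collapsible_looped_non_cover_complex[OF assms(1), of "{}"]
  unfolding non_cover_complex_eq_looped ind_dom_number_eq_ind_closed_dom_number[OF assms] .

end
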